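(* Let $i\in I$ and suppose there is $k\in I$ with $C_{k,i}<-1$. Then for every $w\in W$ the monomial $Y_{w(\omega_i),1}:=T_w(Y_{i,1})$ is a Laurent monomial in the elements $W_{j,b}$, $j\in I$, $b\in\mathbb{C}^\times$.
   Context: Let $\mathfrak{g}$ be a finite-dimensional simple complex Lie algebra with Dynkin index set $I$, Cartan matrix $C=(C_{i,j})$, symmetrizing integers $d_i$ (relatively prime, $(d_iC_{i,j})$ symmetric), lacing number $d=\max_i d_i$, fundamental weights $\omega_i$ and Weyl group $W$. Fix $q\in\mathbb{C}^\times$ not a root of unity, $q_i=q^{d_i}$. Let $\mathcal{Y}=\mathbb{Z}[Y_{i,a}^{\pm1}]_{i\in I,a\in\mathbb{C}^\times}$ and $A_{i,a}=Y_{i,aq_i^{-1}}Y_{i,aq_i}\big(\prod_{C_{j,i}=-1}Y_{j,a}\prod_{C_{j,i}=-2}Y_{j,aq^{-1}}Y_{j,aq}\prod_{C_{j,i}=-3}Y_{j,aq^{-2}}Y_{j,a}Y_{j,aq^2}\big)^{-1}$. Chari operators: ring automorphisms $T_i$ of $\mathcal{Y}$ with $T_i(Y_{i,a})=Y_{i,a}A_{i,aq_i}^{-1}$, $T_i(Y_{j,a})=Y_{j,a}$ ($j\ne i$); they satisfy the braid relations and $T_w:=T_{i_1}\cdots T_{i_k}$ for a reduced decomposition $w=s_{i_1}\cdots s_{i_k}$. $W_{j,b}$ denotes $Y_{j,b}$ if $d_j=d$, $Y_{j,bq^{-1}}Y_{j,bq}$ if $d_j=d-1$, $Y_{j,bq^{-2}}Y_{j,b}Y_{j,bq^2}$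 if $d_j=d-2$. *)

theory Defs
  imports Complex_Main "HOL-Library.Poly_Mapping"
begin

text \<open>A matrix is the Cartan matrix of a finite-dimensional
 simple Lie algebra iff it is an indecomposable generalized Cartan matrix which is
 symmetrizable with positive definite symmetrization (finite type).\<close>

definition simple_cartan :: "('i::finite \<Rightarrow> 'i \<Rightarrow> int) \<Rightarrow> ('i \<Rightarrow> nat) \<Rightarrow> bool" where
  "simple_cartan C d \<longleftrightarrow>
     (\<forall>i. C i i = 2) \<and>
     (\<forall>i j. i \<noteq> j \<longrightarrow> C i j \<le> 0) \<and>
     (\<forall>i j. C i j = 0 \<longleftrightarrow> C j i = 0) \<and>
     (\<forall>i. 0 < d i) \<and>
     (\<forall>i j. int (d i) * C i j = int (d j) * C j i) \<and>
     Gcd (range d) = 1 \<and>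
     (\<forall>x :: 'i \<Rightarrow> real. (\<exists>i. x i \<noteq> 0) \<longrightarrow>
        (\<Sum>i\<in>UNIV. \<Sum>j\<in>UNIV. real_of_int (int (d i) * C i j) * x i * x j) > 0) \<and>
     (\<forall>J :: 'i set. J \<noteq> {} \<and> J \<noteq> UNIV \<longrightarrow> (\<exists>j\<in>J. \<exists>k. k \<notin> J \<and> C j k \<noteq> 0))"

definition lacing :: "('i::finite \<Rightarrow> nat) \<Rightarrow> nat" where
  "lacing d = Max (range d)"

text \<open>alpha_j = sum_k C k j omega_k;  s_j lambda = lambda - lambda_j alpha_j.\<close>
definition srefl :: "('i \<Rightarrow> 'i \<Rightarrow> int) \<Rightarrow> 'i \<Rightarrow> ('i \<Rightarrow> int) \<Rightarrow> ('i \<Rightarrow> int)" where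
  "srefl C j lam = (\<lambda>k. lam k - lam j * C k j)"

definition weyl_word :: "('i \<Rightarrow> 'i \<Rightarrow> int) \<Rightarrow> 'i list \<Rightarrow> ('i \<Rightarrow> int) \<Rightarrow> ('i \<Rightarrow> int)" where
  "weyl_word C ws = foldr (\<lambda>j f. srefl C j \<circ> f) ws id"

definition weyl_group :: "('i \<Rightarrow> 'i \<Rightarrow> int) \<Rightarrow> (('i \<Rightarrow> int) \<Rightarrow> ('i \<Rightarrow> int)) set" where
  "weyl_group C = range (weyl_word C)"

definition reduced_decomp :: "('i \<Rightarrow> 'i \<Rightarrow> int) \<Rightarrow> (('i \<Rightarrow> int) \<Rightarrow> ('i \<Rightarrow> int)) \<Rightarrow> 'i list \<Rightarrow> bool" where
  "reduced_decomp C w ws \<longleftrightarrow> weyl_word C ws = w \<and>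
     (\<forall>vs. weyl_word C vs = w \<longrightarrow> length ws \<le> length vs)"

text \<open>A Laurent monomial in the variables Y_{i,a} is represented additively by its
 finitely supported exponent vector; multiplication of monomials is addition.\<close>
type_synonym 'i monom = "('i \<times> complex) \<Rightarrow>\<^sub>0 int"

definition Yv :: "'i \<Rightarrow> complex \<Rightarrow> 'i monom" where
  "Yv j a = frag_of (j, a)"

definition Am :: "('i::finite \<Rightarrow> 'i \<Rightarrow> int) \<Rightarrow> ('i \<Rightarrow> nat) \<Rightarrow> complex \<Rightarrow> 'i \<Rightarrow> complex \<Rightarrow> 'i monom" where
  "Am C d q i a =
     Yv i (a / q ^ d i) + Yv i (a * q ^ d i)
     - (\<Sum>j\<in>{j. C j i = -1}. Yv j a)
     - (\<Sum>j\<in>{j. C j i = -2}. Yv j (a / q) + Yv j (a * q))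
     - (\<Sum>j\<in>{j. C j i = -3}. Yv j (a / q^2) + Yv j a + Yv j (a * q^2))"

definition chariT :: "('i::finite \<Rightarrow> 'i \<Rightarrow> int) \<Rightarrow> ('i \<Rightarrow> nat) \<Rightarrow> complex \<Rightarrow> 'i \<Rightarrow> 'i monom \<Rightarrow> 'i monom" where
  "chariT C d q i = frag_extend (\<lambda>(j, a). if j = i then Yv i a - Am C d q i (a * q ^ d i) else Yv j a)"

definition chariT_word :: "('i::finite \<Rightarrow> 'i \<Rightarrow> int) \<Rightarrow> ('i \<Rightarrow> nat) \<Rightarrow> complex \<Rightarrow> 'i list \<Rightarrow> 'i monom \<Rightarrow> 'i monom" where
  "chariT_word C d q ws = foldr (\<lambda>j f. chariT C d q j \<circ> f) ws id"

definition Wv :: "('i::finite \<Rightarrow> nat) \<Rightarrow> complex \<Rightarrow> 'i \<Rightarrow> complex \<Rightarrow> 'i monom" where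
  "Wv d q j b =
     (if d j = lacing d then Yv j b
      else if d j + 1 = lacing d then Yv j (b / q) + Yv j (b * q)
      else if d j + 2 = lacing d then Yv j (b / q^2) + Yv j b + Yv j (b * q^2)
      else 0)"

definition laurent_in_W :: "('i::finite \<Rightarrow> nat) \<Rightarrow> complex \<Rightarrow> 'i monom \<Rightarrow> bool" where
  "laurent_in_W d q m \<longleftrightarrow> (\<exists>e :: ('i \<times> complex) \<Rightarrow>\<^sub>0 int. m = frag_extend (\<lambda>(j, b). Wv d q j b) e)"

end

theory Submission
  imports Defs
begin

text \<open>Let D be the lacing number. If every symmetrizer d_v is 1 or D, with D = 2 or 3, then
  each T_j maps every W_{k,b} to a Laurent monomial in the W's: for a long root j the neighbours
  occurring in A_{j,a} enter only through W's, and for a short root j the factors T_j(Y_{j,y})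
  telescope to W_{j,bq^2}^{-1} times the product of the W_{k,bq} over the neighbours k of j.
  Since Y_{i,1} = W_{i,1} for a long root i, the theorem follows for every word, reduced or not;
  of the hypotheses on q only q \<noteq> 0 is needed.

  The symmetrizer has this shape by positive definiteness of B = (d_u C_{uv}): no nonzero
  x \<ge> 0 satisfies (B x)_v \<le> 0 on its support, yet such an x exists if C_{uv} C_{vu} \<ge> 4, and
  also on a shortest path of simple edges joining two distinct multiple edges. So the multiple
  edge k -- i is unique, on the connected diagram d only takes the values d_k and
  d_i = -C_{ki} d_k, and coprimality gives d_k = 1.\<close>

lemma mult_ge_of_le_neg:
  fixes a b m n :: "'a::linordered_idom"
  assumes "a \<le> - m" "b \<le> - n" "0 \<le> m" "0 \<le> n" shows "m * n \<le> a * b"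
  using mult_mono[of m "- a" n "- b"] assms by simp

locale cartan_datum =
  fixes C :: "'i::finite \<Rightarrow> 'i \<Rightarrow> int" and d :: "'i \<Rightarrow> nat"
  assumes simple_cartan: "simple_cartan C d"
begin

lemma cartan_diag [simp]: "C v v = 2"
  using simple_cartan by (simp add: simple_cartan_def)

lemma cartan_offdiag_nonpos: "u \<noteq> v \<Longrightarrow> C u v \<le> 0"
  using simple_cartan by (simp add: simple_cartan_def)

lemma cartan_zero_iff: "C u v = 0 \<longleftrightarrow> C v u = 0"
  using simple_cartan by (simp add: simple_cartan_def)

lemma symmetrizer_pos: "0 < d v"
  using simple_cartan by (simp add: simple_cartan_def)

lemma cartan_symmetrizable: "int (d u) * C u v = int (d v) * C v u"
  using simple_cartan by (simp add: simple_cartan_def)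

lemma cartan_indecomposable: "J \<noteq> {} \<Longrightarrow> J \<noteq> UNIV \<Longrightarrow> \<exists>j\<in>J. \<exists>k. k \<notin> J \<and> C j k \<noteq> 0"
  using simple_cartan unfolding simple_cartan_def by blast

definition sym_cartan :: "'i \<Rightarrow> 'i \<Rightarrow> real" where
  "sym_cartan v w = real (d v) * real_of_int (C v w)"

lemma sym_cartan_commute: "sym_cartan v w = sym_cartan w v"
  unfolding sym_cartan_def by (metis cartan_symmetrizable of_int_mult of_int_of_nat_eq)

lemma sym_cartan_diag [simp]: "sym_cartan v v = 2 * real (d v)"
  by (simp add: sym_cartan_def)

lemma sym_cartan_offdiag_nonpos: "v \<noteq> w \<Longrightarrow> sym_cartan v w \<le> 0"
  by (simp add: sym_cartan_def mult_nonneg_nonpos cartan_offdiag_nonpos)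

lemma sym_cartan_product:
  "sym_cartan u v * sym_cartan v u = real (d u) * real (d v) * real_of_int (C u v * C v u)"
  by (simp add: sym_cartan_def)

text \<open>The quadratic form at x is the sum of the nonpositive terms x_w (B x)_w.\<close>
lemma nonneg_subharmonic_vanishes:
  fixes x :: "'i \<Rightarrow> real"
  assumes nonneg: "\<And>w. 0 \<le> x w"
    and subharmonic: "\<And>w. x w \<noteq> 0 \<Longrightarrow> (\<Sum>u\<in>UNIV. sym_cartan w u * x u) \<le> 0"
  shows "x v = 0"
proof (rule ccontr)
  assume "x v \<noteq> 0"
  then have "(\<Sum>w\<in>UNIV. \<Sum>u\<in>UNIV. real_of_int (int (d w) * C w u) * x w * x u) > 0"
    using simple_cartan unfolding simple_cartan_def by (elim conjE) blast
  also have "(\<Sum>w\<in>UNIV. \<Sum>u\<in>UNIV. real_of_int (int (d w) * C w u) * x w * x u)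
      = (\<Sum>w\<in>UNIV. x w * (\<Sum>u\<in>UNIV. sym_cartan w u * x u))"
    by (simp add: sym_cartan_def sum_distrib_left mult_ac)
  also have "\<dots> \<le> 0"
  proof (rule sum_nonpos)
    show "x w * (\<Sum>u\<in>UNIV. sym_cartan w u * x u) \<le> 0" for w
      using nonneg[of w] subharmonic[of w] by (cases "x w = 0") (auto intro: mult_nonneg_nonpos)
  qed
  finally show False by simp
qed

lemma sym_cartan_row_le:
  fixes x :: "'i \<Rightarrow> real"
  assumes nonneg: "\<And>w. 0 \<le> x w" and "v \<notin> S"
  shows "(\<Sum>w\<in>UNIV. sym_cartan v w * x w) \<le> 2 * real (d v) * x v + (\<Sum>w\<in>S. sym_cartan v w * x w)"
proof -
  let ?f = "\<lambda>w. sym_cartan v w * x w"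
  have "sum ?f UNIV = sum ?f (UNIV - insert v S) + sum ?f (insert v S)"
    by (rule sum.subset_diff) auto
  moreover have "sum ?f (UNIV - insert v S) \<le> 0"
    by (intro sum_nonpos mult_nonpos_nonneg sym_cartan_offdiag_nonpos nonneg) auto
  moreover have "sum ?f (insert v S) = 2 * real (d v) * x v + sum ?f S"
    using \<open>v \<notin> S\<close> by (simp add: sum.insert)
  ultimately show ?thesis by linarith
qed

lemma cartan_product_lt_4:
  assumes "u \<noteq> v" shows "C u v * C v u < 4"
proof (rule ccontr)
  assume "\<not> C u v * C v u < 4"
  then have "4 \<le> real_of_int (C u v * C v u)" by linarith
  then have "4 * (real (d u) * real (d v)) \<le> real_of_int (C u v * C v u) * (real (d u) * real (d v))"
    by (intro mult_right_mono) auto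
  then have big: "4 * (real (d u) * real (d v)) \<le> sym_cartan u v * sym_cartan v u"
    by (simp add: sym_cartan_product mult_ac)
  define \<beta> where "\<beta> = - sym_cartan u v"
  define x where "x w = (if w = u then \<beta> else if w = v then 2 * real (d u) else 0)" for w
  have nonneg: "0 \<le> x w" for w
    using sym_cartan_offdiag_nonpos[OF assms] by (simp add: x_def \<beta>_def)
  have "x v = 0"
  proof (rule nonneg_subharmonic_vanishes[OF nonneg])
    fix w assume "x w \<noteq> 0"
    then consider "w = u" | "w = v" by (auto simp: x_def split: if_splits)
    then show "(\<Sum>w'\<in>UNIV. sym_cartan w w' * x w') \<le> 0"
    proof cases
      case 1
      then show ?thesis
        using sym_cartan_row_le[of x u "{v}", OF nonneg] assms
        by (simp add: x_def \<beta>_def algebra_simps)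
    next
      case 2
      have "(\<Sum>w'\<in>UNIV. sym_cartan v w' * x w') \<le> 2 * real (d v) * x v + sym_cartan v u * x u"
        using sym_cartan_row_le[of x v "{u}", OF nonneg] assms by simp
      also have "\<dots> = 4 * (real (d u) * real (d v)) - sym_cartan u v * sym_cartan v u"
        using assms by (simp add: x_def \<beta>_def sym_cartan_commute[of v u])
      also have "\<dots> \<le> 0" using big by simp
      finally show ?thesis using 2 by simp
    qed
  qed
  then show False
    using assms symmetrizer_pos[of u] by (simp add: x_def)
qed

definition adjacent :: "'i \<Rightarrow> 'i \<Rightarrow> bool" where
  "adjacent u v \<longleftrightarrow> u \<noteq> v \<and> C u v \<noteq> 0"

definition multiple_edge :: "'i \<Rightarrow> 'i \<Rightarrow> bool" where
  "multiple_edge u v \<longleftrightarrow> adjacent u v \<and> d u \<noteq> d v"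

lemma adjacent_sym: "adjacent u v \<Longrightarrow> adjacent v u"
  using cartan_zero_iff by (auto simp: adjacent_def)

lemma multiple_edge_sym: "multiple_edge u v \<Longrightarrow> multiple_edge v u"
  using adjacent_sym by (auto simp: multiple_edge_def)

lemma adjacent_cartan_le: "adjacent u v \<Longrightarrow> C u v \<le> -1"
  using cartan_offdiag_nonpos[of u v] by (auto simp: adjacent_def)

lemma simple_edge_cartan:
  assumes "adjacent u v" "d u = d v" shows "C u v = -1"
proof -
  have "C u v = C v u"
    using cartan_symmetrizable[of u v] assms(2) symmetrizer_pos[of u] by simp
  moreover have "C u v \<le> -1"
    using adjacent_cartan_le[OF assms(1)] .
  moreover have "C u v * C v u < 4"
    using assms(1) cartan_product_lt_4 by (simp add: adjacent_def)
  ultimately show ?thesis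
    using mult_ge_of_le_neg[of "C u v" 2 "C v u" 2] by fastforce
qed

lemma multiple_edge_product:
  assumes "multiple_edge u v" shows "2 \<le> C u v * C v u"
proof -
  have uv: "C u v \<le> -1" and vu: "C v u \<le> -1"
    using assms adjacent_cartan_le adjacent_sym by (auto simp: multiple_edge_def)
  have "C u v \<noteq> -1 \<or> C v u \<noteq> -1"
    using assms cartan_symmetrizable[of u v] by (auto simp: multiple_edge_def)
  then show ?thesis
    using uv vu mult_ge_of_le_neg[of "C u v" 2 "C v u" 1] mult_ge_of_le_neg[of "C u v" 1 "C v u" 2]
    by fastforce
qed

lemma short_long_edge:
  assumes "C k j \<le> -2" shows "C j k = -1" and "d j = d k * nat (- C k j)"
proof -
  have "k \<noteq> j" using assms by auto
  moreover have "C j k \<noteq> 0"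
    using cartan_zero_iff[of k j] assms by auto
  ultimately have "C j k \<le> -1" "C k j * C j k < 4"
    using adjacent_cartan_le[of j k] cartan_product_lt_4[of k j] by (auto simp: adjacent_def)
  then show jk: "C j k = -1"
    using assms mult_ge_of_le_neg[of "C k j" 2 "C j k" 2] by fastforce
  have "int (d j) = int (d k) * (- C k j)"
    using cartan_symmetrizable[of k j] jk by simp
  then have "nat (int (d j)) = nat (int (d k)) * nat (- C k j)"
    by (simp only: nat_mult_distrib of_nat_0_le_iff)
  then show "d j = d k * nat (- C k j)"
    by simp
qed

lemma end_weight:
  assumes "u \<noteq> v" "2 \<le> C u v * C v u"
  defines "s \<equiv> - sym_cartan u v / (2 * real (d u))"
  shows "0 \<le> s" and "2 * real (d u) * s + sym_cartan u v = 0"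
    and "sym_cartan v u * s \<le> - real (d v)"
proof -
  have du: "0 < real (d u)" "0 < real (d v)" using symmetrizer_pos by auto
  show "0 \<le> s"
    using sym_cartan_offdiag_nonpos[OF assms(1)] du unfolding s_def by (intro divide_nonneg_pos) auto
  show "2 * real (d u) * s + sym_cartan u v = 0" using du by (simp add: s_def)
  have "2 \<le> real_of_int (C u v * C v u)"
    using assms(2) by (metis of_int_le_iff of_int_numeral)
  then have "2 * (real (d u) * real (d v)) \<le> real_of_int (C u v * C v u) * (real (d u) * real (d v))"
    by (intro mult_right_mono) auto
  then have "2 * (real (d u) * real (d v)) \<le> sym_cartan u v * sym_cartan u v"
    using sym_cartan_product[of u v] by (simp add: sym_cartan_commute[of v u] mult_ac)
  then show "sym_cartan v u * s \<le> - real (d v)"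
    using du by (simp add: s_def sym_cartan_commute[of v u] field_simps)
qed

lemma path_weights_vanish:
  fixes p :: "nat \<Rightarrow> 'i" and c :: "nat \<Rightarrow> real"
  assumes inj: "inj_on p {..n}" and nonneg: "\<And>t. 0 \<le> c t"
    and rows: "\<And>t. t \<le> n \<Longrightarrow>
      2 * real (d (p t)) * c t + (\<Sum>t'\<in>{t - 1, Suc t} \<inter> {..n} - {t}. sym_cartan (p t) (p t') * c t') \<le> 0"
    and "t \<le> n"
  shows "c t = 0"
proof -
  define x where "x w = (if w \<in> p ` {..n} then c (the_inv_into {..n} p w) else 0)" for w
  have x_path: "x (p t) = c t" if "t \<le> n" for t
    using that inj by (simp add: x_def the_inv_into_f_f)
  have "x (p t) = 0"
  proof (rule nonneg_subharmonic_vanishes)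
    show "0 \<le> x w" for w
      using nonneg by (simp add: x_def)
    fix w assume "x w \<noteq> 0"
    then obtain t where t: "t \<le> n" "w = p t"
      by (auto simp: x_def split: if_splits)
    define N where "N = {t - 1, Suc t} \<inter> {..n} - {t}"
    have N: "N \<subseteq> {..n}" "t \<notin> N" by (auto simp: N_def)
    then have "inj_on p N" "p t \<notin> p ` N"
      using inj t(1) by (auto intro: inj_on_subset dest: inj_onD)
    then have "(\<Sum>u\<in>UNIV. sym_cartan w u * x u)
        \<le> 2 * real (d (p t)) * c t + (\<Sum>t'\<in>N. sym_cartan (p t) (p t') * c t')"
      using sym_cartan_row_le[of x "p t" "p ` N"] \<open>0 \<le> x _\<close> t N(1) x_path
      by (auto simp: sum.reindex subset_iff intro!: sum.cong)
    also have "\<dots> \<le> 0"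
      using rows[OF t(1)] by (simp add: N_def)
    finally show "(\<Sum>u\<in>UNIV. sym_cartan w u * x u) \<le> 0" .
  qed
  then show ?thesis
    using x_path[OF \<open>t \<le> n\<close>] by simp
qed

text \<open>Test vector: the weights of \<open>end_weight\<close> at both ends, and 1 at the inner vertices.\<close>
lemma no_path_with_multiple_end_edges:
  fixes p :: "nat \<Rightarrow> 'i" and n :: nat
  assumes "2 \<le> n" and inj: "inj_on p {..n}"
    and first: "2 \<le> C (p 0) (p 1) * C (p 1) (p 0)"
    and last: "2 \<le> C (p n) (p (n - 1)) * C (p (n - 1)) (p n)"
    and inner: "\<And>t. 0 < t \<Longrightarrow> Suc t < n \<Longrightarrow> C (p t) (p (Suc t)) = -1 \<and> C (p (Suc t)) (p t) = -1"
  shows False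
proof -
  have ends: "p 0 \<noteq> p 1" "p n \<noteq> p (n - 1)"
    using inj \<open>2 \<le> n\<close> by (auto dest: inj_onD)
  define s where "s = - sym_cartan (p 0) (p 1) / (2 * real (d (p 0)))"
  define s' where "s' = - sym_cartan (p n) (p (n - 1)) / (2 * real (d (p n)))"
  note first_weight = end_weight[OF ends(1) first, folded s_def]
  note last_weight = end_weight[OF ends(2) last, folded s'_def]
  define c where "c t = (if t = 0 then s else if t = n then s' else 1)" for t
  have neighbour: "sym_cartan (p t) (p t') * c t' \<le> - real (d (p t))"
    if "0 < t" "t < n" "t' = t - 1 \<or> t' = Suc t" for t t'
  proof -
    have "t' \<le> n" using that by auto
    then consider "t' = 0" | "t' = n" | "0 < t'" "t' < n" by fastforce
    then show ?thesis
    proof cases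
      case 1
      then have "t = 1" using that by auto
      then show ?thesis using 1 first_weight(3) by (simp add: c_def)
    next
      case 2
      then have "t = n - 1" using that by auto
      then show ?thesis using 2 last_weight(3) \<open>2 \<le> n\<close> by (simp add: c_def)
    qed (use that inner[of t] inner[of "t - 1"] in \<open>auto simp: c_def sym_cartan_def\<close>)
  qed
  have "c 1 = 0"
  proof (rule path_weights_vanish[OF inj])
    show "0 \<le> c t" for t
      using first_weight(1) last_weight(1) by (simp add: c_def)
    fix t assume "t \<le> n"
    then consider "t = 0" | "t = n" | "0 < t" "t < n" by fastforce
    then show "2 * real (d (p t)) * c t
        + (\<Sum>t'\<in>{t - 1, Suc t} \<inter> {..n} - {t}. sym_cartan (p t) (p t') * c t') \<le> 0"
    proof cases
      case 1
      then have "{t - 1, Suc t} \<inter> {..n} - {t} = {1}" using \<open>2 \<le> n\<close> by auto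
      then show ?thesis using 1 first_weight(2) \<open>2 \<le> n\<close> by (simp add: c_def)
    next
      case 2
      then have "{t - 1, Suc t} \<inter> {..n} - {t} = {n - 1}" using \<open>2 \<le> n\<close> by auto
      moreover have "n - 1 \<noteq> n" "n - 1 \<noteq> 0" using \<open>2 \<le> n\<close> by auto
      ultimately show ?thesis using 2 last_weight(2) by (simp add: c_def)
    next
      case 3
      then have "{t - 1, Suc t} \<inter> {..n} - {t} = {t - 1, Suc t}" "t - 1 \<noteq> Suc t" by auto
      then show ?thesis
        using 3 neighbour[of t "t - 1"] neighbour[of t "Suc t"] by (simp add: c_def)
    qed
  qed (use \<open>2 \<le> n\<close> in simp)
  then show False
    using \<open>2 \<le> n\<close> by (simp add: c_def)
qed

definition walk :: "'i list \<Rightarrow> bool" where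
  "walk ps \<longleftrightarrow> ps \<noteq> [] \<and> successively adjacent ps"

lemma walk_exists: "\<exists>ps. walk ps \<and> hd ps = u \<and> last ps = v"
proof -
  define J where "J = {v. \<exists>ps. walk ps \<and> hd ps = u \<and> last ps = v}"
  have "u \<in> J"
    unfolding J_def walk_def by (rule CollectI, rule exI[of _ "[u]"]) simp
  have "J = UNIV"
  proof (rule ccontr)
    assume "J \<noteq> UNIV"
    with \<open>u \<in> J\<close> obtain j k where "j \<in> J" "k \<notin> J" "C j k \<noteq> 0"
      using cartan_indecomposable by blast
    moreover from \<open>j \<in> J\<close> obtain ps where "walk ps" "hd ps = u" "last ps = j"
      by (auto simp: J_def)
    ultimately have "walk (ps @ [k]) \<and> hd (ps @ [k]) = u \<and> last (ps @ [k]) = k"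
      by (auto simp: walk_def adjacent_def successively_append_iff)
    then have "k \<in> J" by (auto simp: J_def)
    with \<open>k \<notin> J\<close> show False by simp
  qed
  then show ?thesis by (auto simp: J_def)
qed

definition bridge :: "'i \<Rightarrow> 'i \<Rightarrow> 'i \<Rightarrow> 'i \<Rightarrow> 'i list \<Rightarrow> bool" where
  "bridge a b c e ps \<longleftrightarrow> multiple_edge a b \<and> multiple_edge c e \<and> {a, b} \<noteq> {c, e}
     \<and> walk ps \<and> hd ps = b \<and> last ps = c"

definition shortest_bridge :: "'i \<Rightarrow> 'i \<Rightarrow> 'i \<Rightarrow> 'i \<Rightarrow> 'i list \<Rightarrow> bool" where
  "shortest_bridge a b c e ps \<longleftrightarrow> bridge a b c e ps \<and>
     (\<forall>a' b' c' e' ps'. bridge a' b' c' e' ps' \<longrightarrow> length ps \<le> length ps')"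

lemma bridge_rev: "bridge a b c e ps \<Longrightarrow> bridge e c b a (rev ps)"
  unfolding bridge_def walk_def
  by (auto simp: hd_rev last_rev insert_commute multiple_edge_sym
      intro: successively_mono adjacent_sym)

lemma shortest_bridge_rev: "shortest_bridge a b c e ps \<Longrightarrow> shortest_bridge e c b a (rev ps)"
  by (simp add: shortest_bridge_def bridge_rev)

lemma shortest_bridgeD:
  "shortest_bridge a b c e ps \<Longrightarrow> bridge a' b' c' e' ps' \<Longrightarrow> length ps \<le> length ps'"
  by (simp add: shortest_bridge_def)

lemma shortest_bridge_distinct:
  assumes "shortest_bridge a b c e ps" shows "distinct ps"
proof (rule ccontr)
  assume "\<not> distinct ps"
  then obtain xs y ys zs where ps: "ps = xs @ [y] @ ys @ [y] @ zs"
    using not_distinct_decomp by blast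
  have "successively adjacent ps"
    using assms by (simp add: shortest_bridge_def bridge_def walk_def)
  then have "successively adjacent (xs @ [y] @ zs)"
    unfolding ps by (auto simp: successively_append_iff successively_Cons)
  moreover have "hd (xs @ [y] @ zs) = hd ps" "last (xs @ [y] @ zs) = last ps"
    unfolding ps by (cases xs; simp) (cases zs; simp)
  ultimately have "bridge a b c e (xs @ [y] @ zs)"
    using assms by (simp add: shortest_bridge_def bridge_def walk_def)
  from shortest_bridgeD[OF assms this] ps show False by simp
qed

lemma shortest_bridge_first:
  assumes "shortest_bridge a b c e ps" "x \<in> set ps" "x \<in> {a, b}" shows "x = hd ps"
proof (rule ccontr)
  assume "x \<noteq> hd ps"
  from \<open>x \<in> set ps\<close> obtain ys zs where ps: "ps = ys @ x # zs"
    by (meson split_list)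
  with \<open>x \<noteq> hd ps\<close> have "ys \<noteq> []" by auto
  have bridge: "bridge a b c e ps"
    using assms(1) by (simp add: shortest_bridge_def)
  then have "walk (x # zs)" "last (x # zs) = c"
    unfolding ps bridge_def walk_def by (auto simp: successively_append_iff)
  moreover obtain y where "multiple_edge y x" "{y, x} = {a, b}"
    using assms(3) bridge multiple_edge_sym by (auto simp: bridge_def insert_commute)
  ultimately have "bridge y x c e (x # zs)"
    using bridge by (simp add: bridge_def)
  from shortest_bridgeD[OF assms(1) this] ps \<open>ys \<noteq> []\<close> show False by simp
qed

lemma shortest_bridge_last:
  "shortest_bridge a b c e ps \<Longrightarrow> x \<in> set ps \<Longrightarrow> x \<in> {c, e} \<Longrightarrow> x = last ps"
  using shortest_bridge_first[OF shortest_bridge_rev] by (fastforce simp: hd_rev insert_commute)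

lemma shortest_bridge_simple:
  assumes "shortest_bridge a b c e ps" "Suc t < length ps"
  shows "d (ps ! t) = d (ps ! Suc t)"
proof (rule ccontr)
  assume "d (ps ! t) \<noteq> d (ps ! Suc t)"
  with assms have edge: "multiple_edge (ps ! t) (ps ! Suc t)"
    by (auto simp: multiple_edge_def shortest_bridge_def bridge_def walk_def successively_nth)
  have "ps ! Suc t \<noteq> ps ! 0"
    using nth_eq_iff_index_eq[OF shortest_bridge_distinct[OF assms(1)], of "Suc t" 0] assms(2)
    by fastforce
  then have "ps ! Suc t \<noteq> hd ps"
    using assms(2) by (subst hd_conv_nth) auto
  then have "ps ! Suc t \<notin> {a, b}"
    using shortest_bridge_first[OF assms(1)] assms(2) by auto
  then have new: "{a, b} \<noteq> {ps ! t, ps ! Suc t}" by auto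
  have "successively adjacent (take (Suc t) ps)"
    using assms(1) successively_append_iff[of adjacent "take (Suc t) ps" "drop (Suc t) ps"]
    by (simp add: shortest_bridge_def bridge_def walk_def)
  then have "bridge a b (ps ! t) (ps ! Suc t) (take (Suc t) ps)"
    using assms edge new
    by (auto simp: shortest_bridge_def bridge_def walk_def last_conv_nth)
  from shortest_bridgeD[OF assms(1) this] assms(2) show False by simp
qed

lemma shortest_bridge_ends_distinct:
  assumes "shortest_bridge a b c e ps" shows "a \<noteq> e"
proof
  assume "a = e"
  have "ps \<noteq> [b]"
  proof
    assume "ps = [b]"
    then have "c = b" using assms by (simp add: shortest_bridge_def bridge_def)
    then show False
      using assms \<open>a = e\<close> by (simp add: shortest_bridge_def bridge_def insert_commute)
  qed
  then have "1 < length ps"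
    using assms by (cases ps) (auto simp: shortest_bridge_def bridge_def walk_def)
  moreover have "bridge b a e c [a]"
    using assms \<open>a = e\<close>
    by (auto simp: shortest_bridge_def bridge_def walk_def insert_commute multiple_edge_sym)
  ultimately show False
    using shortest_bridgeD[OF assms] by fastforce
qed

lemma shortest_bridge_exists:
  "bridge a b c e ps \<Longrightarrow> \<exists>a b c e ps. shortest_bridge a b c e ps"
proof (induction "length ps" arbitrary: a b c e ps rule: less_induct)
  case less
  show ?case
  proof (cases "shortest_bridge a b c e ps")
    case False
    then obtain a' b' c' e' ps' where "bridge a' b' c' e' ps'" "length ps' < length ps"
      using less.prems by (auto simp: shortest_bridge_def not_le)
    then show ?thesis using less.hyps by blast
  qed blast
qed

lemma shortest_bridge_impossible:
  assumes sb: "shortest_bridge a b c e ps" shows False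
proof -
  have "bridge a b c e ps" using sb by (simp add: shortest_bridge_def)
  then have ps: "ps \<noteq> []" "successively adjacent ps" "hd ps = b" "last ps = c"
    and ab: "multiple_edge a b" and ce: "multiple_edge c e"
    by (auto simp: bridge_def walk_def)
  define vs where "vs = a # ps @ [e]"
  define n where "n = Suc (length ps)"
  have "a \<notin> set ps"
    using shortest_bridge_first[OF sb, of a] ab ps(3) by (auto simp: multiple_edge_def adjacent_def)
  moreover have "e \<notin> set ps"
    using shortest_bridge_last[OF sb, of e] ce ps(4) by (auto simp: multiple_edge_def adjacent_def)
  ultimately have "distinct vs"
    using shortest_bridge_distinct[OF sb] shortest_bridge_ends_distinct[OF sb] by (simp add: vs_def)
  then have inj: "inj_on (nth vs) {..n}"
    by (rule inj_on_nth) (simp add: vs_def n_def)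
  have vs_inner: "vs ! t = ps ! (t - 1)" if "0 < t" "t < n" for t
    using that by (auto simp: vs_def n_def nth_Cons' nth_append)
  have vs_ends: "vs ! 0 = a" "vs ! 1 = b" "vs ! n = e" "vs ! (n - 1) = c"
    using ps vs_inner[of 1] vs_inner[of "n - 1"]
    by (auto simp: vs_def n_def hd_conv_nth last_conv_nth nth_append)
  show False
  proof (rule no_path_with_multiple_end_edges[OF _ inj])
    show "2 \<le> n" using ps(1) by (cases ps) (auto simp: n_def)
    show "2 \<le> C (vs ! 0) (vs ! 1) * C (vs ! 1) (vs ! 0)"
      using multiple_edge_product[OF ab] vs_ends by simp
    show "2 \<le> C (vs ! n) (vs ! (n - 1)) * C (vs ! (n - 1)) (vs ! n)"
      using multiple_edge_product[OF multiple_edge_sym[OF ce]] vs_ends by simp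
    show "C (vs ! t) (vs ! Suc t) = -1 \<and> C (vs ! Suc t) (vs ! t) = -1"
      if "0 < t" "Suc t < n" for t
    proof -
      have t: "Suc (t - 1) = t" "t < length ps" using that by (auto simp: n_def)
      then have "adjacent (ps ! (t - 1)) (ps ! t)" "d (ps ! (t - 1)) = d (ps ! t)"
        using successively_nth[OF ps(2), of "t - 1"] shortest_bridge_simple[OF sb, of "t - 1"]
        by auto
      moreover have "vs ! t = ps ! (t - 1)" "vs ! Suc t = ps ! t"
        using vs_inner[of t] vs_inner[of "Suc t"] that by auto
      ultimately show ?thesis
        using simple_edge_cartan adjacent_sym by simp
    qed
  qed
qed

theorem multiple_edge_unique:
  assumes "multiple_edge a b" "multiple_edge c e" shows "{a, b} = {c, e}"
proof (rule ccontr)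
  assume "{a, b} \<noteq> {c, e}"
  moreover obtain ps where "walk ps" "hd ps = b" "last ps = c"
    using walk_exists by blast
  ultimately have "bridge a b c e ps"
    using assms by (simp add: bridge_def)
  then show False
    using shortest_bridge_exists shortest_bridge_impossible by blast
qed

lemma gcd_symmetrizer: "Gcd (range d) = 1"
  using simple_cartan by (simp add: simple_cartan_def)

theorem root_lengths:
  assumes "C k i < -1"
  shows "\<forall>v. d v = 1 \<or> d v = lacing d" and "lacing d = 2 \<or> lacing d = 3"
    and "d i = lacing d"
proof -
  define r where "r = nat (- C k i)"
  have "k \<noteq> i" using assms by auto
  have "C i k = -1" and di: "d i = d k * r"
    using short_long_edge assms by (auto simp: r_def)
  moreover have "C k i * C i k < 4"
    using cartan_product_lt_4[OF \<open>k \<noteq> i\<close>] .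
  ultimately have r: "r = 2 \<or> r = 3"
    using assms by (auto simp: r_def)
  have "d k \<noteq> d i"
    using di r symmetrizer_pos[of k] by auto
  then have ki: "multiple_edge k i"
    using assms \<open>k \<noteq> i\<close> by (simp add: multiple_edge_def adjacent_def)
  have two_values: "d v = d k \<or> d v = d i" for v
  proof -
    define J where "J = {v. d v = d k \<or> d v = d i}"
    have "J = UNIV"
    proof (rule ccontr)
      assume "J \<noteq> UNIV"
      moreover have "k \<in> J" by (simp add: J_def)
      ultimately obtain j l where "j \<in> J" "l \<notin> J" "C j l \<noteq> 0"
        using cartan_indecomposable by blast
      then have "multiple_edge j l"
        by (auto simp: multiple_edge_def adjacent_def J_def)
      then have "{j, l} = {k, i}"
        using multiple_edge_unique ki by blast
      with \<open>l \<notin> J\<close> show False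
        by (auto simp: J_def doubleton_eq_iff)
    qed
    then show ?thesis by (auto simp: J_def)
  qed
  have "d k dvd Gcd (range d)"
  proof (rule Gcd_greatest)
    show "d k dvd m" if "m \<in> range d" for m
      using that two_values[of "inv d m"] di by (auto simp: f_inv_into_f)
  qed
  then have dk: "d k = 1"
    by (simp add: gcd_symmetrizer)
  have lacing: "lacing d = d i"
    unfolding lacing_def
  proof (rule Max_eqI)
    fix m assume "m \<in> range d"
    then obtain v where "m = d v" by auto
    then show "m \<le> d i"
      using two_values[of v] dk symmetrizer_pos[of i] by auto
  qed auto
  show "\<forall>v. d v = 1 \<or> d v = lacing d" "d i = lacing d"
    using two_values dk lacing by auto
  show "lacing d = 2 \<or> lacing d = 3"
    using lacing di dk r by simp
qed

end

lemma frag_extend_frag_extend: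
  "frag_extend f (frag_extend g c) = frag_extend (frag_extend f \<circ> g) c"
  using subset_UNIV
  by (induction c rule: frag_induction) (auto simp: frag_extend_diff)

lemma laurent_in_W_Wv: "laurent_in_W d q (Wv d q j b)"
  unfolding laurent_in_W_def by (rule exI[of _ "frag_of (j, b)"]) simp

lemma laurent_in_W_0: "laurent_in_W d q 0"
  unfolding laurent_in_W_def by (rule exI[of _ 0]) simp

lemma laurent_in_W_frag_extend:
  assumes "\<And>x. laurent_in_W d q (g x)" shows "laurent_in_W d q (frag_extend g c)"
proof -
  obtain e where "\<And>x. g x = frag_extend (\<lambda>(j, b). Wv d q j b) (e x)"
    using assms unfolding laurent_in_W_def by metis
  then have "g = frag_extend (\<lambda>(j, b). Wv d q j b) \<circ> e"
    by auto
  then have "frag_extend g c = frag_extend (\<lambda>(j, b). Wv d q j b) (frag_extend e c)"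
    by (simp add: frag_extend_frag_extend)
  then show ?thesis
    unfolding laurent_in_W_def by blast
qed

lemma laurent_in_W_diff:
  "laurent_in_W d q m \<Longrightarrow> laurent_in_W d q m' \<Longrightarrow> laurent_in_W d q (m - m')"
  unfolding laurent_in_W_def by (metis frag_extend_diff)

lemma laurent_in_W_add:
  "laurent_in_W d q m \<Longrightarrow> laurent_in_W d q m' \<Longrightarrow> laurent_in_W d q (m + m')"
  unfolding laurent_in_W_def by (metis frag_extend_add)

lemma laurent_in_W_sum:
  "(\<And>x. x \<in> S \<Longrightarrow> laurent_in_W d q (f x)) \<Longrightarrow> laurent_in_W d q (\<Sum>x\<in>S. f x)"
  by (induction S rule: infinite_finite_induct) (auto intro: laurent_in_W_0 laurent_in_W_add)

lemma chariT_Yv: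
  "chariT C d q j (Yv k a) = (if k = j then Yv j a - Am C d q j (a * q ^ d j) else Yv k a)"
  by (simp add: chariT_def Yv_def)

lemma chariT_zero: "chariT C d q j 0 = 0"
  by (simp add: chariT_def)

lemma chariT_add: "chariT C d q j (m + m') = chariT C d q j m + chariT C d q j m'"
  by (simp add: chariT_def frag_extend_add)

lemma laurent_in_W_chariT:
  assumes "\<And>k b. laurent_in_W d q (chariT C d q j (Wv d q k b))" and "laurent_in_W d q m"
  shows "laurent_in_W d q (chariT C d q j m)"
proof -
  obtain e where "m = frag_extend (\<lambda>(k, b). Wv d q k b) e"
    using assms(2) unfolding laurent_in_W_def by blast
  then have "chariT C d q j m = frag_extend (\<lambda>(k, b). chariT C d q j (Wv d q k b)) e"
    by (simp add: chariT_def frag_extend_frag_extend comp_def case_prod_unfold)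
  then show ?thesis
    by (auto intro: laurent_in_W_frag_extend assms(1))
qed

context cartan_datum
begin

context
  fixes q :: complex
  assumes q_nonzero: "q \<noteq> 0"
    and two_lengths: "\<forall>v. d v = 1 \<or> d v = lacing d"
    and lacing_2_3: "lacing d = 2 \<or> lacing d = 3"
begin

lemma long_simple_neighbour:
  assumes "d j = lacing d" "C k j = -1" shows "d k = lacing d"
proof (rule ccontr)
  assume "d k \<noteq> lacing d"
  then have "d k = 1" using two_lengths by auto
  moreover have "C j k \<le> -1"
    using assms(2) adjacent_cartan_le[of j k] cartan_zero_iff[of k j] by (force simp: adjacent_def)
  ultimately show False
    using cartan_symmetrizable[of k j] assms lacing_2_3 by auto
qed

lemma long_multiple_neighbour:
  assumes "d j = lacing d" "C k j = - int m" "m = 2 \<or> m = 3"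
  shows "d k = 1" and "lacing d = m"
proof -
  have "d j = d k * m"
    using short_long_edge(2)[of k j] assms by auto
  then show "d k = 1"
    using assms two_lengths[rule_format, of k] lacing_2_3 by auto
  with \<open>d j = d k * m\<close> show "lacing d = m"
    using assms(1) by simp
qed

lemma short_neighbour_simple:
  assumes "d j = 1" shows "-1 \<le> C k j"
proof (rule ccontr)
  assume "\<not> -1 \<le> C k j"
  then have "d j = d k * nat (- C k j)" "2 \<le> nat (- C k j)"
    using short_long_edge(2)[of k j] by auto
  moreover have "1 * 2 \<le> d k * nat (- C k j)"
    using calculation(2) symmetrizer_pos[of k] by (intro mult_le_mono) auto
  ultimately show False
    using assms by simp
qed

lemma laurent_in_W_Yv_long: "d k = lacing d \<Longrightarrow> laurent_in_W d q (Yv k x)"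
  using laurent_in_W_Wv[of d q k x] by (simp add: Wv_def)

lemma laurent_in_W_Am_long:
  assumes "d j = lacing d" shows "laurent_in_W d q (Am C d q j a)"
proof -
  have "laurent_in_W d q (Yv j (a / q ^ d j) + Yv j (a * q ^ d j))"
    using assms by (intro laurent_in_W_add laurent_in_W_Yv_long)
  moreover have "laurent_in_W d q (Yv k a)" if "C k j = -1" for k
    using long_simple_neighbour[OF assms that] laurent_in_W_Yv_long by blast
  moreover have "laurent_in_W d q (Yv k (a / q) + Yv k (a * q))" if "C k j = -2" for k
    using long_multiple_neighbour[OF assms, of k 2] that laurent_in_W_Wv[of d q k a]
    by (simp add: Wv_def)
  moreover have "laurent_in_W d q (Yv k (a / q^2) + Yv k a + Yv k (a * q^2))" if "C k j = -3" for k
    using long_multiple_neighbour[OF assms, of k 3] that laurent_in_W_Wv[of d q k a]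
    by (simp add: Wv_def)
  ultimately show ?thesis
    unfolding Am_def by (intro laurent_in_W_diff laurent_in_W_sum) auto
qed

lemma chariT_short_Yv:
  assumes "d j = 1"
  shows "chariT C d q j (Yv j x) = (\<Sum>k | C k j = -1. Yv k (x * q)) - Yv j (x * q^2)"
proof -
  have "C k j \<noteq> -2" "C k j \<noteq> -3" for k
    using short_neighbour_simple[OF assms, of k] by auto
  then have "{k. C k j = -2} = {}" "{k. C k j = -3} = {}"
    by auto
  then show ?thesis
    using assms q_nonzero by (simp add: chariT_Yv Am_def power2_eq_square mult.assoc)
qed

lemma chariT_short_Wv_2:
  assumes "d j = 1" "lacing d = 2"
  shows "chariT C d q j (Wv d q j b)
    = (\<Sum>k | C k j = -1. Yv k b + Yv k (b * q^2)) - Wv d q j (b * q^2)"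
proof -
  have shifts: "b / q * q = b" "b / q * q^2 = b * q" "b * q * q = b * q^2" "b * q * q^2 = b * q^3"
    "b * q^2 / q = b * q" "b * q^2 * q = b * q^3"
    using q_nonzero by (simp_all add: power2_eq_square power3_eq_cube)
  have "chariT C d q j (Wv d q j b) = chariT C d q j (Yv j (b / q)) + chariT C d q j (Yv j (b * q))"
    using assms by (simp add: Wv_def chariT_add)
  also have "\<dots> = (\<Sum>k | C k j = -1. Yv k b) - Yv j (b * q)
      + ((\<Sum>k | C k j = -1. Yv k (b * q^2)) - Yv j (b * q^3))"
    unfolding chariT_short_Yv[OF assms(1)] shifts ..
  also have "\<dots> = (\<Sum>k | C k j = -1. Yv k b + Yv k (b * q^2)) - Wv d q j (b * q^2)"
    using assms by (simp add: Wv_def shifts sum.distrib)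
  finally show ?thesis .
qed

lemma chariT_short_Wv_3:
  assumes "d j = 1" "lacing d = 3"
  shows "chariT C d q j (Wv d q j b)
    = (\<Sum>k | C k j = -1. Yv k (b / q) + Yv k (b * q) + Yv k (b * q^3)) - Wv d q j (b * q^2)"
proof -
  have shifts: "b / q^2 * q = b / q" "b / q^2 * q^2 = b" "b * q^2 * q = b * q^3"
    "b * q^2 * q^2 = b * q^4" "b * q^2 / q^2 = b"
    using q_nonzero by (simp_all add: power2_eq_square power3_eq_cube power4_eq_xxxx)
  have "chariT C d q j (Wv d q j b)
      = chariT C d q j (Yv j (b / q^2)) + chariT C d q j (Yv j b) + chariT C d q j (Yv j (b * q^2))"
    using assms by (simp add: Wv_def chariT_add)
  also have "\<dots> = (\<Sum>k | C k j = -1. Yv k (b / q)) - Yv j b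
      + ((\<Sum>k | C k j = -1. Yv k (b * q)) - Yv j (b * q^2))
      + ((\<Sum>k | C k j = -1. Yv k (b * q^3)) - Yv j (b * q^4))"
    unfolding chariT_short_Yv[OF assms(1)] shifts ..
  also have "\<dots> = (\<Sum>k | C k j = -1. Yv k (b / q) + Yv k (b * q) + Yv k (b * q^3)) - Wv d q j (b * q^2)"
    using assms by (simp add: Wv_def shifts sum.distrib)
  finally show ?thesis .
qed

lemma laurent_in_W_chariT_Wv: "laurent_in_W d q (chariT C d q j (Wv d q k b))"
proof (cases "k = j")
  case False
  then have "chariT C d q j (Wv d q k b) = Wv d q k b"
    by (simp add: Wv_def chariT_add chariT_Yv chariT_zero)
  then show ?thesis
    using laurent_in_W_Wv by simp
next
  case True
  have short_or_long: "d k = 1 \<or> d k = lacing d" for k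
    using two_lengths by blast
  consider "d j = lacing d" | "d j = 1" "lacing d = 2" | "d j = 1" "lacing d = 3"
    using two_lengths lacing_2_3 by blast
  then show ?thesis
  proof cases
    case 1
    then show ?thesis
      using True by (simp add: Wv_def chariT_Yv laurent_in_W_diff laurent_in_W_Yv_long laurent_in_W_Am_long)
  next
    case 2
    have "laurent_in_W d q (Yv k b + Yv k (b * q^2))" for k
    proof (cases "d k = 1")
      case True
      then have "Wv d q k (b * q) = Yv k b + Yv k (b * q^2)"
        using 2 q_nonzero by (simp add: Wv_def power2_eq_square mult.assoc)
      then show ?thesis
        using laurent_in_W_Wv by metis
    qed (use short_or_long in \<open>auto intro: laurent_in_W_add laurent_in_W_Yv_long\<close>)
    then show ?thesis
      unfolding True chariT_short_Wv_2[OF 2]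
      by (intro laurent_in_W_diff laurent_in_W_sum laurent_in_W_Wv)
  next
    case 3
    have "laurent_in_W d q (Yv k (b / q) + Yv k (b * q) + Yv k (b * q^3))" for k
    proof (cases "d k = 1")
      case True
      then have "Wv d q k (b * q) = Yv k (b / q) + Yv k (b * q) + Yv k (b * q^3)"
        using 3 q_nonzero by (simp add: Wv_def power2_eq_square power3_eq_cube mult.assoc)
      then show ?thesis
        using laurent_in_W_Wv by metis
    qed (use short_or_long in \<open>auto intro: laurent_in_W_add laurent_in_W_Yv_long\<close>)
    then show ?thesis
      unfolding True chariT_short_Wv_3[OF 3]
      by (intro laurent_in_W_diff laurent_in_W_sum laurent_in_W_Wv)
  qed
qed

lemma laurent_in_W_chariT_word:
  "laurent_in_W d q m \<Longrightarrow> laurent_in_W d q (chariT_word C d q ws m)"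
  by (induction ws) (auto simp: chariT_word_def intro: laurent_in_W_chariT laurent_in_W_chariT_Wv)

end

end

theorem mainTheorem2:
  fixes C :: "'i::finite \<Rightarrow> 'i \<Rightarrow> int" and d :: "'i \<Rightarrow> nat" and q :: complex and i :: 'i
  assumes "simple_cartan C d"
    and "q \<noteq> 0" and "\<forall>n::nat. 0 < n \<longrightarrow> q ^ n \<noteq> 1"
    and "\<exists>k. C k i < -1"
  shows "\<forall>w \<in> weyl_group C. \<forall>ws. reduced_decomp C w ws \<longrightarrow>
           laurent_in_W d q (chariT_word C d q ws (Yv i 1))"
proof (intro ballI allI impI)
  fix w ws
  interpret cartan_datum C d
    using assms(1) by (rule cartan_datum.intro)
  obtain k where "C k i < -1"
    using assms(4) by blast
  note lengths = root_lengths[OF this]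
  have "laurent_in_W d q (Yv i 1)"
    using laurent_in_W_Wv[of d q i 1] lengths(3) by (simp add: Wv_def)
  then show "laurent_in_W d q (chariT_word C d q ws (Yv i 1))"
    using laurent_in_W_chariT_word[OF assms(2) lengths(1,2)] by blast
qed

end
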